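(* Let $G=(V,E)$ be a finite, connected, undirected graph with $n\ge2$ vertices. For the Moran process $(X_i)_{i\ge0}$ on $G$ with $r=1$, started from $X_0=\{x\}$ with $x$ chosen uniformly at random from $V$, the expected absorption time is at most $n^4\big(\phi(G)^2-\phi'_0\big)$, where $\phi'_0=\frac1n\sum_{x\in V}(\deg x)^{-2}$.
   Context: The Moran process on $G$ with mutant fitness $r>0$ is the Markov chain $(X_i)_{i\ge0}$ whose state $X_i\subseteq V$ is the set of vertices occupied by mutants; every other vertex is occupied by a non-mutant of fitness $1$. Write $W(S)=r|S|+|V\setminus S|$ for the total fitness. Given $X_i=S$, one step is: choose a vertex $x$ with probability $r/W(S)$ if $x\in S$ and $1/W(S)$ if $x\notin S$; then choose a neighbour $y$ of $x$ uniformly at random; set $X_{i+1}=S\cup\{y\}$ if $x\in S$ and $X_{i+1}=S\setminus\{y\}$ if $x\notin S$. The absorption time is $\min\{i: X_i=\emptyset\text{ or }X_i=V\}$. For $X\subseteq V$, $\phi(X)=\sum_{x\in X}\frac{1}{\deg x}$, and $\phi(G)=\phi(V)$. *)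

theory Defs
  imports "HOL-Probability.Probability"
begin

definition simple_graph :: "'a set \<Rightarrow> ('a \<Rightarrow> 'a \<Rightarrow> bool) \<Rightarrow> bool" where
  "simple_graph V E \<longleftrightarrow> finite V \<and>
     (\<forall>x y. E x y \<longrightarrow> x \<in> V \<and> y \<in> V \<and> E y x \<and> x \<noteq> y)"

definition connected_graph :: "'a set \<Rightarrow> ('a \<Rightarrow> 'a \<Rightarrow> bool) \<Rightarrow> bool" where
  "connected_graph V E \<longleftrightarrow> (\<forall>x\<in>V. \<forall>y\<in>V. E\<^sup>*\<^sup>* x y)"

definition nbrs :: "'a set \<Rightarrow> ('a \<Rightarrow> 'a \<Rightarrow> bool) \<Rightarrow> 'a \<Rightarrow> 'a set" where
  "nbrs V E x = {y \<in> V. E x y}"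

definition deg :: "'a set \<Rightarrow> ('a \<Rightarrow> 'a \<Rightarrow> bool) \<Rightarrow> 'a \<Rightarrow> nat" where
  "deg V E x = card (nbrs V E x)"

definition phi :: "'a set \<Rightarrow> ('a \<Rightarrow> 'a \<Rightarrow> bool) \<Rightarrow> 'a set \<Rightarrow> real" where
  "phi V E X = (\<Sum>x\<in>X. 1 / real (deg V E x))"

definition fitness :: "'a set \<Rightarrow> real \<Rightarrow> 'a set \<Rightarrow> real" where
  "fitness V r S = r * real (card S) + real (card (V - S))"

definition moran_step :: "'a set \<Rightarrow> ('a \<Rightarrow> 'a \<Rightarrow> bool) \<Rightarrow> real \<Rightarrow> 'a set \<Rightarrow> 'a set pmf" where
  "moran_step V E r S =
     bind_pmf
       (embed_pmf (\<lambda>x. if x \<in> V then (if x \<in> S then r else 1) / fitness V r S else 0))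
       (\<lambda>x. map_pmf (\<lambda>y. if x \<in> S then insert y S else S - {y}) (pmf_of_set (nbrs V E x)))"

fun moran_traj :: "'a set \<Rightarrow> ('a \<Rightarrow> 'a \<Rightarrow> bool) \<Rightarrow> real \<Rightarrow> 'a set pmf \<Rightarrow> nat \<Rightarrow> 'a set list pmf" where
  "moran_traj V E r init 0 = map_pmf (\<lambda>S. [S]) init"
| "moran_traj V E r init (Suc i) =
     bind_pmf (moran_traj V E r init i)
       (\<lambda>xs. map_pmf (\<lambda>S. xs @ [S]) (moran_step V E r (last xs)))"

(* Expected absorption time E[T] of T = min{i. X_i = {} or X_i = V},
   via E[T] = sum_{i>=0} P(T > i), where T > i iff X_0, ..., X_i are all
   non-absorbing.  Value in ennreal (may be infinite). *)
definition expected_absorption_time ::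
  "'a set \<Rightarrow> ('a \<Rightarrow> 'a \<Rightarrow> bool) \<Rightarrow> real \<Rightarrow> 'a set pmf \<Rightarrow> ennreal" where
  "expected_absorption_time V E r init =
     (\<Sum>i. ennreal (measure_pmf.prob (moran_traj V E r init i)
                     {xs. \<forall>S\<in>set xs. S \<noteq> {} \<and> S \<noteq> V}))"

end

theory Submission
  imports Defs
begin

(* For r = 1 every vertex reproduces with probability 1/n.  Consider the potential
     psi(S) = phi(S) * (phi(G) - phi(S)),
   which is nonnegative on subsets of V and vanishes exactly on the absorbing states
   {} and V.  A reproduction of x onto a neighbour y changes phi by +-1/deg y; these
   changes cancel in expectation (the contributions of an edge from both ends are
   opposite), so E[psi(X')] = psi(S) - Var/n, and on a non-absorbing S the variance
   term is at least 1/n^3 because some edge leaves S.  Hence psi(X_i), stopped at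
   absorption, decreases in expectation by n^-4 * P(T > i) per step; telescoping gives
   E[T] = sum_i P(T > i) <= n^4 * E[psi(X_0)].  Finally, for X_0 a uniform singleton,
   E[psi(X_0)] = (phi(G)^2 - sum_x deg(x)^-2) / n <= phi(G)^2 - phi'_0. *)

lemma suminf_le_by_decrease:
  fixes u p :: "nat \<Rightarrow> real" and c :: real
  assumes c: "c > 0" and p: "\<And>j. p j \<ge> 0" and u: "\<And>j. u j \<ge> 0"
    and decr: "\<And>j. u (Suc j) \<le> u j - c * p j"
  shows "(\<Sum>j. ennreal (p j)) \<le> ennreal (u 0 / c)"
proof (rule suminf_le_const)
  show "summable (\<lambda>j. ennreal (p j))" by simp
  fix m
  have tele: "c * (\<Sum>j<m. p j) \<le> u 0 - u m"
  proof (induction m)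
    case (Suc m)
    then show ?case using decr[of m] by (simp add: distrib_left)
  qed simp
  then have "(\<Sum>j<m. p j) \<le> u 0 / c"
    using u[of m] c by (simp add: field_simps)
  moreover have "(\<Sum>j<m. ennreal (p j)) = ennreal (\<Sum>j<m. p j)"
    using p by (simp add: sum_ennreal)
  ultimately show "(\<Sum>j<m. ennreal (p j)) \<le> ennreal (u 0 / c)"
    by (simp add: ennreal_leI)
qed

locale connected_simple_graph =
  fixes V :: "'a set" and E :: "'a \<Rightarrow> 'a \<Rightarrow> bool"
  assumes simple: "simple_graph V E" and connected: "connected_graph V E"
begin

lemma finite_V: "finite V"
  using simple by (simp add: simple_graph_def)

lemma edge_sym: "E x y \<Longrightarrow> E y x"
  using simple by (simp add: simple_graph_def)

lemma edge_in_V: "E x y \<Longrightarrow> x \<in> V \<and> y \<in> V"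
  using simple by (simp add: simple_graph_def)

lemma nbrs_subset: "nbrs V E x \<subseteq> V"
  by (auto simp: nbrs_def)

lemma finite_nbrs: "finite (nbrs V E x)"
  using finite_V nbrs_subset finite_subset by blast

lemma deg_le_card: "deg V E x \<le> card V"
  unfolding deg_def by (rule card_mono[OF finite_V nbrs_subset])

lemma sum_nbrs: "(\<Sum>y\<in>nbrs V E x. f y) = (\<Sum>y\<in>V. if E x y then f y else 0)"
  unfolding nbrs_def using finite_V by (simp add: sum.inter_filter)

(* Every directed edge appears together with its reverse, so the total over directed
   edges of an antisymmetrised function is zero. *)
lemma sum_edges_antisym:
  "(\<Sum>x\<in>V. \<Sum>y\<in>nbrs V E x. F x y - F y x) = (0::real)"
proof -
  have "(\<Sum>x\<in>V. \<Sum>y\<in>V. if E x y then F y x else 0) = (\<Sum>y\<in>V. \<Sum>x\<in>V. if E x y then F y x else 0)"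
    by (rule sum.swap)
  also have "\<dots> = (\<Sum>x\<in>V. \<Sum>y\<in>V. if E x y then F x y else 0)"
    by (intro sum.cong refl) (metis edge_sym)
  finally show ?thesis
    by (simp add: sum_nbrs sum_subtractf if_distrib[of "\<lambda>t. t - _"] cong: if_cong)
qed

lemma boundary_edge:
  assumes "S \<subseteq> V" "S \<noteq> {}" "S \<noteq> V"
  shows "\<exists>u v. E u v \<and> u \<in> S \<and> v \<in> V \<and> v \<notin> S"
proof -
  obtain a b where a: "a \<in> S" and b: "b \<in> V" "b \<notin> S" using assms by auto
  have "E\<^sup>*\<^sup>* a b" using connected a b assms(1) unfolding connected_graph_def by blast
  then have "a \<in> S \<Longrightarrow> b \<notin> S \<Longrightarrow> \<exists>u v. E u v \<and> u \<in> S \<and> v \<notin> S"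
    by (induction rule: rtranclp_induct) blast+
  then show ?thesis using a b edge_in_V by blast
qed

end

locale nontrivial_graph = connected_simple_graph +
  assumes two_vertices: "card V \<ge> 2"
begin

lemma V_nonempty: "V \<noteq> {}"
  using two_vertices by auto

lemma card_V_pos: "real (card V) > 0"
  using two_vertices by simp

lemma nbrs_nonempty:
  assumes "x \<in> V" shows "nbrs V E x \<noteq> {}"
proof -
  have "\<not> V \<subseteq> {x}"
    using two_vertices card_mono[of "{x}" V] by auto
  then obtain y where y: "y \<in> V" "y \<noteq> x" by blast
  have "E\<^sup>*\<^sup>* x y" using connected assms y unfolding connected_graph_def by blast
  then obtain z where "E x z" using y(2) by (metis converse_rtranclpE)
  then show ?thesis using edge_in_V by (auto simp: nbrs_def)
qed

lemma deg_pos: "x \<in> V \<Longrightarrow> real (deg V E x) > 0"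
  using nbrs_nonempty finite_nbrs unfolding deg_def by (simp add: card_gt_0_iff)

section \<open>One step of the neutral Moran process\<close>

definition update :: "'a set \<Rightarrow> 'a \<Rightarrow> 'a \<Rightarrow> 'a set" where
  "update S x y = (if x \<in> S then insert y S else S - {y})"

lemma moran_step_neutral:
  assumes "S \<subseteq> V"
  shows "moran_step V E 1 S = pmf_of_set V \<bind> (\<lambda>x. map_pmf (update S x) (pmf_of_set (nbrs V E x)))"
proof -
  have "fitness V 1 S = real (card V)"
    unfolding fitness_def
    using card_Diff_subset[OF finite_subset[OF assms finite_V] assms] card_mono[OF finite_V assms]
    by (simp add: of_nat_diff)
  then have "(\<lambda>x. if x \<in> V then (if x \<in> S then 1 else 1) / fitness V 1 S else 0) = pmf (pmf_of_set V)"
    using finite_V V_nonempty by (intro ext) (simp add: indicator_def)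
  then have "embed_pmf (\<lambda>x. if x \<in> V then (if x \<in> S then 1 else 1) / fitness V 1 S else 0) = pmf_of_set V"
    using type_definition.Rep_inverse[OF td_pmf_embed_pmf] by metis
  then show ?thesis unfolding moran_step_def update_def by simp
qed

lemma moran_step_subsets:
  assumes "S \<subseteq> V" shows "set_pmf (moran_step V E 1 S) \<subseteq> Pow V"
  unfolding moran_step_neutral[OF assms]
  using finite_V V_nonempty nbrs_nonempty finite_nbrs nbrs_subset assms
  by (auto simp: update_def)

lemma moran_step_finite:
  assumes "S \<subseteq> V" shows "finite (set_pmf (moran_step V E 1 S))"
  using moran_step_subsets[OF assms] finite_V by (meson finite_Pow_iff finite_subset)

lemma moran_step_expectation:
  assumes "S \<subseteq> V"
  shows "measure_pmf.expectation (moran_step V E 1 S) f =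
     (\<Sum>x\<in>V. \<Sum>y\<in>nbrs V E x. f (update S x y) / real (deg V E x)) / real (card V)"
proof -
  have "measure_pmf.expectation (moran_step V E 1 S) f =
     (\<Sum>x\<in>V. measure_pmf.expectation (map_pmf (update S x) (pmf_of_set (nbrs V E x))) f /\<^sub>R real (card V))"
    unfolding moran_step_neutral[OF assms]
    by (rule pmf_expectation_bind_pmf_of_set) (use V_nonempty finite_V nbrs_nonempty finite_nbrs in auto)
  also have "\<dots> = (\<Sum>x\<in>V. ((\<Sum>y\<in>nbrs V E x. f (update S x y)) / real (deg V E x)) / real (card V))"
    by (intro sum.cong refl)
       (simp add: integral_pmf_of_set nbrs_nonempty finite_nbrs deg_def divide_inverse_commute)
  finally show ?thesis by (simp add: sum_divide_distrib)
qed

section \<open>The potential and its drift\<close>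

definition phi_change :: "'a set \<Rightarrow> 'a \<Rightarrow> 'a \<Rightarrow> real" where
  "phi_change S x y = (if x \<in> S \<and> y \<notin> S then 1 / real (deg V E y)
     else if x \<notin> S \<and> y \<in> S then - 1 / real (deg V E y) else 0)"

lemma phi_update:
  assumes "S \<subseteq> V"
  shows "phi V E (update S x y) = phi V E S + phi_change S x y"
  using finite_subset[OF assms finite_V]
  by (cases "x \<in> S"; cases "y \<in> S")
     (auto simp: update_def phi_change_def phi_def insert_absorb sum_diff1)

lemma phi_change_balanced:
  "(\<Sum>x\<in>V. \<Sum>y\<in>nbrs V E x. phi_change S x y / real (deg V E x)) = 0"
proof -
  define F where "F x y = (if x \<in> S \<and> y \<notin> S then 1 / (real (deg V E x) * real (deg V E y)) else 0)" for x y
  have "(\<Sum>x\<in>V. \<Sum>y\<in>nbrs V E x. phi_change S x y / real (deg V E x))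
      = (\<Sum>x\<in>V. \<Sum>y\<in>nbrs V E x. F x y - F y x)"
    by (intro sum.cong refl) (auto simp: F_def phi_change_def)
  then show ?thesis using sum_edges_antisym by simp
qed

definition psi :: "'a set \<Rightarrow> real" where
  "psi S = phi V E S * (phi V E V - phi V E S)"

lemma psi_nonneg:
  assumes "S \<subseteq> V" shows "0 \<le> psi S"
proof -
  have "0 \<le> phi V E S" unfolding phi_def by (rule sum_nonneg) simp
  moreover have "phi V E S \<le> phi V E V"
    unfolding phi_def using finite_V assms by (intro sum_mono2) auto
  ultimately show ?thesis unfolding psi_def by simp
qed

lemma psi_absorbing: "psi {} = 0" "psi V = 0"
  by (auto simp: psi_def phi_def)

(* Quadratic variation of phi in one step from S (up to the factor 1/n). *)
definition variation :: "'a set \<Rightarrow> real" where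
  "variation S = (\<Sum>x\<in>V. \<Sum>y\<in>nbrs V E x. (phi_change S x y)\<^sup>2 / real (deg V E x))"

(* Since psi is a concave quadratic in phi and E[phi'] = phi, psi drops by the variance. *)
lemma psi_step_expectation:
  assumes "S \<subseteq> V"
  shows "measure_pmf.expectation (moran_step V E 1 S) psi = psi S - variation S / real (card V)"
proof -
  let ?c = "phi V E V - 2 * phi V E S"
  have psi_upd: "psi (update S x y) / real (deg V E x) =
      psi S / real (deg V E x) + ?c * (phi_change S x y / real (deg V E x))
      - (phi_change S x y)\<^sup>2 / real (deg V E x)" for x y
    unfolding psi_def phi_update[OF assms]
    by (simp add: algebra_simps power2_eq_square diff_divide_distrib add_divide_distrib)
  have count: "(\<Sum>y\<in>nbrs V E x. psi S / real (deg V E x)) = psi S" if "x \<in> V" for x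
    using deg_pos[OF that] by (simp add: deg_def)
  have "(\<Sum>x\<in>V. \<Sum>y\<in>nbrs V E x. psi (update S x y) / real (deg V E x))
      = (\<Sum>x\<in>V. \<Sum>y\<in>nbrs V E x. psi S / real (deg V E x))
        + ?c * (\<Sum>x\<in>V. \<Sum>y\<in>nbrs V E x. phi_change S x y / real (deg V E x)) - variation S"
    unfolding psi_upd variation_def by (simp add: sum.distrib sum_subtractf sum_distrib_left)
  also have "\<dots> = real (card V) * psi S - variation S"
    using phi_change_balanced count by simp
  finally show ?thesis
    unfolding moran_step_expectation[OF assms] using card_V_pos by (simp add: field_simps)
qed

(* A boundary edge u -> v contributes 1/(deg u * deg v^2) >= 1/n^3 to the variation. *)
lemma variation_lower_bound:
  assumes "S \<subseteq> V" "S \<noteq> {}" "S \<noteq> V"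
  shows "1 / real (card V) ^ 3 \<le> variation S"
proof -
  let ?n = "real (card V)"
  obtain u v where uv: "E u v" "u \<in> S" "v \<in> V" "v \<notin> S" using boundary_edge[OF assms] by blast
  have u: "u \<in> V" and vu: "v \<in> nbrs V E u" using uv assms by (auto simp: nbrs_def)
  have du: "0 < real (deg V E u)" "real (deg V E u) \<le> ?n" using deg_pos[OF u] deg_le_card[of u] by auto
  have dv: "0 < real (deg V E v)" "real (deg V E v) \<le> ?n" using deg_pos[OF uv(3)] deg_le_card[of v] by auto
  have "real (deg V E u) * real (deg V E v) ^ 2 \<le> ?n * ?n ^ 2"
    using du dv by (intro mult_mono power_mono) auto
  then have "1 / ?n ^ 3 \<le> 1 / (real (deg V E u) * real (deg V E v) ^ 2)"
    using du dv by (intro divide_left_mono) (auto simp: power3_eq_cube power2_eq_square)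
  also have "\<dots> = (phi_change S u v)\<^sup>2 / real (deg V E u)"
    using uv by (simp add: phi_change_def power2_eq_square)
  also have "\<dots> \<le> (\<Sum>y\<in>nbrs V E u. (phi_change S u y)\<^sup>2 / real (deg V E u))"
    using du finite_nbrs vu by (intro member_le_sum) auto
  also have "\<dots> \<le> variation S"
    unfolding variation_def using deg_pos u finite_V
    by (intro member_le_sum sum_nonneg) (auto intro: divide_nonneg_pos)
  finally show ?thesis .
qed

lemma psi_drift:
  assumes "S \<subseteq> V" "S \<noteq> {}" "S \<noteq> V"
  shows "measure_pmf.expectation (moran_step V E 1 S) psi \<le> psi S - 1 / real (card V) ^ 4"
proof -
  have "1 / real (card V) ^ 4 = (1 / real (card V) ^ 3) / real (card V)"
    by (simp add: power_Suc2 numeral_eq_Suc)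
  also have "\<dots> \<le> variation S / real (card V)"
    using variation_lower_bound[OF assms] card_V_pos by (intro divide_right_mono) auto
  finally show ?thesis
    unfolding psi_step_expectation[OF assms(1)] by simp
qed

section \<open>The stopped potential along trajectories\<close>

definition traj_space :: "nat \<Rightarrow> 'a set list set" where
  "traj_space i = {xs. set xs \<subseteq> Pow V \<and> length xs = Suc i}"

lemma finite_traj_space: "finite (traj_space i)"
  unfolding traj_space_def by (rule finite_lists_length_eq) (simp add: finite_V)

lemma last_traj_space:
  assumes "xs \<in> traj_space i" shows "last xs \<subseteq> V"
proof -
  have "xs \<noteq> []" "set xs \<subseteq> Pow V" using assms by (auto simp: traj_space_def)
  then show ?thesis using last_in_set by blast
qed

lemma moran_traj_support:
  assumes "set_pmf init \<subseteq> Pow V"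
  shows "set_pmf (moran_traj V E 1 init i) \<subseteq> traj_space i"
proof (induction i)
  case 0 then show ?case using assms by (auto simp: traj_space_def)
next
  case (Suc i)
  show ?case
  proof
    fix ys assume "ys \<in> set_pmf (moran_traj V E 1 init (Suc i))"
    then obtain xs S where xs: "xs \<in> set_pmf (moran_traj V E 1 init i)" and
      S: "S \<in> set_pmf (moran_step V E 1 (last xs))" and ys: "ys = xs @ [S]" by auto
    have "xs \<in> traj_space i" using xs Suc by auto
    moreover then have "S \<subseteq> V" using moran_step_subsets[OF last_traj_space] S by auto
    ultimately show "ys \<in> traj_space (Suc i)" using ys by (auto simp: traj_space_def)
  qed
qed

lemma expectation_traj_space:
  assumes "set_pmf M \<subseteq> traj_space i"
  shows "measure_pmf.expectation M f = (\<Sum>xs\<in>traj_space i. pmf M xs * f xs)"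
  using assms finite_traj_space by (subst integral_measure_pmf[of "traj_space i"]) auto

(* The event T > i: no state of the prefix is absorbing. *)
definition alive :: "'a set list \<Rightarrow> bool" where
  "alive xs \<longleftrightarrow> (\<forall>S\<in>set xs. S \<noteq> {} \<and> S \<noteq> V)"

definition stopped_psi :: "'a set list \<Rightarrow> real" where
  "stopped_psi xs = (if alive xs then psi (last xs) else 0)"

(* Since psi vanishes on absorbing states, extending a prefix only requires the
   prefix itself to be alive. *)
lemma stopped_psi_snoc: "stopped_psi (xs @ [S]) = (if alive xs then psi S else 0)"
proof -
  have "alive (xs @ [S]) \<longleftrightarrow> alive xs \<and> S \<noteq> {} \<and> S \<noteq> V"
    by (auto simp: alive_def)
  then show ?thesis
    using psi_absorbing by (cases "S = {} \<or> S = V") (auto simp: stopped_psi_def)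
qed

lemma stopped_psi_initial: "stopped_psi [S] = psi S"
  using stopped_psi_snoc[of "[]" S] by (simp add: alive_def)

lemma stopped_psi_drift:
  assumes "xs \<in> traj_space i"
  shows "measure_pmf.expectation (moran_step V E 1 (last xs)) (\<lambda>S. stopped_psi (xs @ [S]))
     \<le> stopped_psi xs - 1 / real (card V) ^ 4 * indicator {xs. alive xs} xs"
proof (cases "alive xs")
  case False
  then have "stopped_psi xs = 0" by (simp add: stopped_psi_def)
  then show ?thesis using False by (simp add: stopped_psi_snoc)
next
  case True
  have L: "last xs \<subseteq> V" using last_traj_space[OF assms] .
  have "last xs \<in> set xs" using assms by (cases xs) (auto simp: traj_space_def)
  then have nontriv: "last xs \<noteq> {}" "last xs \<noteq> V" using True by (auto simp: alive_def)
  have "measure_pmf.expectation (moran_step V E 1 (last xs)) (\<lambda>S. stopped_psi (xs @ [S]))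
      = measure_pmf.expectation (moran_step V E 1 (last xs)) psi"
    using True by (simp add: stopped_psi_snoc)
  also have "\<dots> \<le> psi (last xs) - 1 / real (card V) ^ 4" by (rule psi_drift[OF L nontriv])
  finally show ?thesis using True by (simp add: stopped_psi_def)
qed

lemma stopped_psi_decrease:
  fixes i :: nat
  assumes "set_pmf init \<subseteq> Pow V"
  defines "M \<equiv> moran_traj V E 1 init i"
  shows "measure_pmf.expectation (moran_traj V E 1 init (Suc i)) stopped_psi
    \<le> measure_pmf.expectation M stopped_psi
       - 1 / real (card V) ^ 4 * measure_pmf.prob M {xs. alive xs}"
proof -
  let ?c = "1 / real (card V) ^ 4"
  let ?I = "indicator {xs. alive xs} :: _ \<Rightarrow> real"
  have supp: "set_pmf M \<subseteq> traj_space i" unfolding M_def by (rule moran_traj_support[OF assms(1)])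
  have fin: "finite (set_pmf (map_pmf (\<lambda>S. a @ [S]) (moran_step V E 1 (last a))))"
    if "a \<in> traj_space i" for a
    using moran_step_finite[OF last_traj_space[OF that]] by simp
  have "measure_pmf.expectation (moran_traj V E 1 init (Suc i)) stopped_psi
     = (\<Sum>a\<in>traj_space i. pmf M a * measure_pmf.expectation (moran_step V E 1 (last a)) (\<lambda>S. stopped_psi (a @ [S])))"
    unfolding moran_traj.simps M_def[symmetric]
    by (subst pmf_expectation_bind[OF finite_traj_space fin supp]) simp_all
  also have "\<dots> \<le> (\<Sum>a\<in>traj_space i. pmf M a * (stopped_psi a - ?c * ?I a))"
    by (intro sum_mono mult_left_mono stopped_psi_drift) auto
  also have "\<dots> = (\<Sum>a\<in>traj_space i. pmf M a * stopped_psi a) - ?c * (\<Sum>a\<in>traj_space i. pmf M a * ?I a)"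
    by (simp add: algebra_simps sum_subtractf sum_distrib_left)
  also have "\<dots> = measure_pmf.expectation M stopped_psi - ?c * measure_pmf.expectation M ?I"
    by (simp only: expectation_traj_space[OF supp])
  also have "measure_pmf.expectation M ?I = measure_pmf.prob M {xs. alive xs}"
    by (simp add: measure_pmf.emeasure_eq_measure)
  finally show ?thesis .
qed

theorem absorption_time_le_potential:
  assumes "set_pmf init \<subseteq> Pow V"
  shows "expected_absorption_time V E 1 init
     \<le> ennreal (real (card V) ^ 4 * measure_pmf.expectation init psi)"
proof -
  define u where "u i = measure_pmf.expectation (moran_traj V E 1 init i) stopped_psi" for i
  have u_nonneg: "u i \<ge> 0" for i
    unfolding u_def expectation_traj_space[OF moran_traj_support[OF assms]]
    by (intro sum_nonneg mult_nonneg_nonneg) (auto simp: stopped_psi_def psi_nonneg last_traj_space)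
  have u0: "u 0 = measure_pmf.expectation init psi"
    unfolding u_def by (simp add: stopped_psi_initial)
  have "expected_absorption_time V E 1 init
      = (\<Sum>i. ennreal (measure_pmf.prob (moran_traj V E 1 init i) {xs. alive xs}))"
    by (simp add: expected_absorption_time_def alive_def)
  also have "\<dots> \<le> ennreal (u 0 / (1 / real (card V) ^ 4))"
    using card_V_pos u_nonneg stopped_psi_decrease[OF assms]
    by (intro suminf_le_by_decrease) (auto simp: u_def)
  finally show ?thesis using u0 by (simp add: mult.commute)
qed

lemma potential_uniform_singleton:
  "measure_pmf.expectation (map_pmf (\<lambda>x. {x}) (pmf_of_set V)) psi
     = ((phi V E V)\<^sup>2 - (\<Sum>x\<in>V. 1 / (real (deg V E x))\<^sup>2)) / real (card V)"
proof -
  have "(\<Sum>x\<in>V. psi {x}) = (\<Sum>x\<in>V. phi V E V * (1 / real (deg V E x)) - 1 / (real (deg V E x))\<^sup>2)"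
    by (intro sum.cong refl) (simp add: psi_def phi_def algebra_simps power2_eq_square)
  also have "\<dots> = phi V E V * (\<Sum>x\<in>V. 1 / real (deg V E x)) - (\<Sum>x\<in>V. 1 / (real (deg V E x))\<^sup>2)"
    by (simp only: sum_subtractf sum_distrib_left)
  also have "\<dots> = (phi V E V)\<^sup>2 - (\<Sum>x\<in>V. 1 / (real (deg V E x))\<^sup>2)"
    by (simp only: phi_def power2_eq_square)
  finally show ?thesis
    using finite_V V_nonempty by (simp add: integral_pmf_of_set)
qed

end

theorem theorem9:
  fixes V :: "'a set" and E :: "'a \<Rightarrow> 'a \<Rightarrow> bool"
  assumes "simple_graph V E"
    and "connected_graph V E"
    and "card V \<ge> 2"
  shows "expected_absorption_time V E 1 (map_pmf (\<lambda>x. {x}) (pmf_of_set V))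
     \<le> ennreal (real (card V) ^ 4 *
          ((phi V E V)\<^sup>2 - (1 / real (card V)) * (\<Sum>x\<in>V. 1 / (real (deg V E x))\<^sup>2)))"
proof -
  interpret nontrivial_graph V E
    using assms by unfold_locales
  let ?n = "real (card V)" and ?P = "phi V E V" and ?Q = "\<Sum>x\<in>V. 1 / (real (deg V E x))\<^sup>2"
  have init: "set_pmf (map_pmf (\<lambda>x. {x}) (pmf_of_set V)) \<subseteq> Pow V"
    using finite_V V_nonempty by auto
  (* Dividing phi(G)^2 by n >= 1 only makes it smaller. *)
  have "(?P\<^sup>2 - ?Q) / ?n \<le> ?P\<^sup>2 - 1 / ?n * ?Q"
    using two_vertices by (simp add: diff_divide_distrib divide_le_eq mult_le_cancel_left1)
  then have "?n ^ 4 * ((?P\<^sup>2 - ?Q) / ?n) \<le> ?n ^ 4 * (?P\<^sup>2 - 1 / ?n * ?Q)"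
    by (rule mult_left_mono) simp
  then show ?thesis
    using absorption_time_le_potential[OF init] unfolding potential_uniform_singleton
    by (meson ennreal_leI order_trans)
qed

end
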